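(* In the setting of the context, for every $N>0$, $$\iint_{\overline{R}_N}\left|\frac{\partial v_N}{\partial x}\right|^2\,dx\,dy\le\frac{16}{N}.$$
   Context: Fix a small universal constant $\alpha\in(0,1)$ (e.g. $\alpha=1/10$). For $N>0$ let $\overline{R}_N=[-3N,3N]\times[-1,1]\subset\mathbb{R}^2$ with coordinates $(x,y)$, and define $f_N(x)=1-\alpha$ if $|x|\le N$, $f_N(x)=\frac{|x|(1+\alpha)}{N}-2\alpha$ if $N\le|x|\le 2N$, $f_N(x)=2$ if $2N\le|x|\le3N$. For $x\in[-3N,3N]$ and $w\in W^{1,2}([-1,1])$ let $H_x(w)=\int_{-1}^1(w'(y))^2dy+|\{w\neq0\}\cap[-1,1]|$. The slice minimizer $v_N$ is defined by letting, for each $x\in[-3N,3N]$, $v_N(x,\cdot)$ be the unique minimizer of $H_x$ among $w\in W^{1,2}([-1,1])$ with $w(\pm1)=\pm f_N(x)$. *)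

theory Defs
  imports "HOL-Analysis.Analysis"
begin

definition fN :: "real \<Rightarrow> real \<Rightarrow> real \<Rightarrow> real" where
  "fN \<alpha> N x =
     (if \<bar>x\<bar> \<le> N then 1 - \<alpha>
      else if \<bar>x\<bar> \<le> 2 * N then \<bar>x\<bar> * (1 + \<alpha>) / N - 2 * \<alpha>
      else 2)"

text \<open>W^{1,2}([-1,1]) in one dimension: w (continuous representative, normalised to
  vanish outside [-1,1]) is the integral of a square-integrable weak derivative g.\<close>
definition W12 :: "(real \<Rightarrow> real) \<Rightarrow> (real \<Rightarrow> real) \<Rightarrow> bool" where
  "W12 w g \<longleftrightarrow>
     set_integrable lborel {-1..1} g \<and>
     set_integrable lborel {-1..1} (\<lambda>y. (g y)\<^sup>2) \<and>
     (\<forall>y\<in>{-1..1}. w y = w (-1) + set_lebesgue_integral lborel {-1..y} g) \<and>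
     (\<forall>y. y \<notin> {-1..1} \<longrightarrow> w y = 0)"

definition Hx :: "(real \<Rightarrow> real) \<Rightarrow> (real \<Rightarrow> real) \<Rightarrow> real" where
  "Hx w g = set_lebesgue_integral lborel {-1..1} (\<lambda>y. (g y)\<^sup>2)
            + measure lborel {y\<in>{-1..1}. w y \<noteq> 0}"

definition admissible :: "real \<Rightarrow> (real \<Rightarrow> real) \<Rightarrow> (real \<Rightarrow> real) \<Rightarrow> bool" where
  "admissible a w g \<longleftrightarrow> W12 w g \<and> w (-1) = - a \<and> w 1 = a"

definition slice_min :: "real \<Rightarrow> (real \<Rightarrow> real) \<Rightarrow> bool" where
  "slice_min a w \<longleftrightarrow>
     (\<exists>g. admissible a w g \<and> (\<forall>w' g'. admissible a w' g' \<longrightarrow> Hx w g \<le> Hx w' g'))"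

definition vN :: "real \<Rightarrow> real \<Rightarrow> real \<Rightarrow> real \<Rightarrow> real" where
  "vN \<alpha> N x y = (THE w. slice_min (fN \<alpha> N x) w) y"

text \<open>Pointwise partial derivative in x (set to 0 where it does not exist;
  v_N is Lipschitz in x, so this is the a.e./weak derivative).\<close>
definition dvN_dx :: "real \<Rightarrow> real \<Rightarrow> real \<Rightarrow> real \<Rightarrow> real" where
  "dvN_dx \<alpha> N x y =
     (if (\<lambda>t. vN \<alpha> N t y) differentiable (at x) then deriv (\<lambda>t. vN \<alpha> N t y) x else 0)"

end

(*
  For a > 0 the slice problem has an explicit minimiser. Put s = min a 1: the profile rises with
  slope a/s on [-1, s - 1] and on [1 - s, 1] and vanishes in between, with energy 2a^2/s + 2s.
  An admissible w changes sign, so it has a first zero p and a last zero q. By Cauchy-Schwarz the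
  Dirichlet energy on [-1, p] and on [q, 1] is at least a^2/(p + 1) and a^2/(1 - q), while
  {w ~= 0} has measure at least (p + 1) + (1 - q); bounding a^2/t from below by its tangent at
  t = s and using (p + 1) + (1 - q) <= 2 gives H(w) >= 2a^2/s + 2s, and equality in every
  step forces w to be the profile. So v_N(x, .) is the profile for a = f_N(x).

  The profile is 1-Lipschitz in a and f_N is (1 + alpha)/N-Lipschitz, so |d v_N / dx| <= 2/N;
  where |x| < N or |x| > 2N, f_N is locally constant and the derivative vanishes. The band
  N <= |x| <= 2N of the rectangle has area 4N, whence the bound 4/N^2 * 4N = 16/N.
*)
theory Submission
  imports Defs
begin

section \<open>Cauchy--Schwarz on an interval\<close>

lemma integral_square_shift:
  fixes g :: "real \<Rightarrow> real"
  assumes g: "g integrable_on {u..v}" and g2: "(\<lambda>y. (g y)\<^sup>2) integrable_on {u..v}" and "u \<le> v"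
  shows "(\<lambda>y. (g y - c)\<^sup>2) integrable_on {u..v}"
    and "integral {u..v} (\<lambda>y. (g y - c)\<^sup>2)
           = integral {u..v} (\<lambda>y. (g y)\<^sup>2) - 2 * c * integral {u..v} g + c\<^sup>2 * (v - u)"
proof -
  have expand: "(\<lambda>y. (g y - c)\<^sup>2) = (\<lambda>y. (g y)\<^sup>2 - 2 * c * g y + c\<^sup>2)"
    by (auto simp: power2_eq_square algebra_simps)
  have cg: "(\<lambda>y. 2 * c * g y) integrable_on {u..v}"
    using integrable_cmul[OF g, of "2 * c"] by simp
  show "(\<lambda>y. (g y - c)\<^sup>2) integrable_on {u..v}"
    unfolding expand using g2 cg by (intro integrable_add integrable_diff) auto
  show "integral {u..v} (\<lambda>y. (g y - c)\<^sup>2)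
          = integral {u..v} (\<lambda>y. (g y)\<^sup>2) - 2 * c * integral {u..v} g + c\<^sup>2 * (v - u)"
    unfolding expand using g g2 cg \<open>u \<le> v\<close>
    by (subst integral_add, (auto intro!: integrable_diff)[2], subst integral_diff) auto
qed

lemma integral_square_le:
  fixes g :: "real \<Rightarrow> real"
  assumes g: "g integrable_on {u..v}" and g2: "(\<lambda>y. (g y)\<^sup>2) integrable_on {u..v}" and "u \<le> v"
  shows "(integral {u..v} g)\<^sup>2 \<le> (v - u) * integral {u..v} (\<lambda>y. (g y)\<^sup>2)"
proof (cases "u = v")
  case False
  then have len: "0 < v - u" using \<open>u \<le> v\<close> by simp
  define I where "I = integral {u..v} g"
  define c where "c = I / (v - u)"
  note shift = integral_square_shift[OF g g2 \<open>u \<le> v\<close>, of c]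
  have "0 \<le> integral {u..v} (\<lambda>y. (g y - c)\<^sup>2)"
    using shift(1) by (rule integral_nonneg) simp
  also have "\<dots> = integral {u..v} (\<lambda>y. (g y)\<^sup>2) - c * I"
    unfolding shift(2) using len by (simp add: c_def I_def power2_eq_square)
  finally show ?thesis using len by (simp add: c_def I_def field_simps power2_eq_square)
qed simp

text \<open>Equality in the Cauchy--Schwarz inequality forces the primitive of \<open>g\<close> to be affine.\<close>
lemma integral_affine_if_square_le:
  fixes g :: "real \<Rightarrow> real"
  assumes g: "g integrable_on {u..v}" and g2: "(\<lambda>y. (g y)\<^sup>2) integrable_on {u..v}"
    and total: "integral {u..v} g = c * (v - u)"
    and energy: "integral {u..v} (\<lambda>y. (g y)\<^sup>2) \<le> c\<^sup>2 * (v - u)"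
    and y: "y \<in> {u..v}"
  shows "integral {u..y} g = c * (y - u)"
proof -
  have uy: "u \<le> y" "y \<le> v" using y by auto
  let ?h = "\<lambda>y. g y - c"
  note shift = integral_square_shift[OF g g2 order_trans[OF uy], of c]
  have "integral {u..y} (\<lambda>y. (?h y)\<^sup>2) + integral {y..v} (\<lambda>y. (?h y)\<^sup>2)
          = integral {u..v} (\<lambda>y. (?h y)\<^sup>2)"
    by (rule Henstock_Kurzweil_Integration.integral_combine[OF uy shift(1)])
  also have "\<dots> \<le> 0"
    unfolding shift(2) total using energy by (simp add: power2_eq_square algebra_simps)
  finally have "integral {u..y} (\<lambda>y. (?h y)\<^sup>2) \<le> 0"
    using integral_nonneg[OF integrable_on_subinterval[OF shift(1)], of y v] uy by force
  moreover have gy: "g integrable_on {u..y}" "(\<lambda>y. (g y)\<^sup>2) integrable_on {u..y}"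
    using integrable_on_subinterval[OF g] integrable_on_subinterval[OF g2] uy by auto
  moreover have "?h integrable_on {u..y}" using gy by (intro integrable_diff) auto
  ultimately have "(integral {u..y} ?h)\<^sup>2 \<le> 0"
    using integral_square_le[of ?h u y] integral_square_shift(1)[OF gy uy(1), of c] uy(1)
    by (smt (verit) mult_nonneg_nonpos)
  moreover have "integral {u..y} ?h = integral {u..y} g - c * (y - u)"
    using gy uy by (subst integral_diff) auto
  ultimately show ?thesis by simp
qed

section \<open>Admissible functions\<close>

lemma W12_integrable:
  assumes "W12 w g"
  shows "g integrable_on {-1..1}" and "(\<lambda>y. (g y)\<^sup>2) integrable_on {-1..1}"
  using assms unfolding W12_def by (auto intro: set_borel_integral_eq_integral(1))

lemma W12_primitive:
  assumes "W12 w g" and "y \<in> {-1..1}"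
  shows "w y = w (-1) + integral {-1..y} g"
proof -
  have "set_integrable lborel {-1..1} g" using assms(1) unfolding W12_def by blast
  then have "set_integrable lborel {-1..y} g"
    by (rule set_integrable_subset) (use assms(2) in auto)
  then have "set_lebesgue_integral lborel {-1..y} g = integral {-1..y} g"
    by (rule set_borel_integral_eq_integral(2))
  moreover have "w y = w (-1) + set_lebesgue_integral lborel {-1..y} g"
    using assms unfolding W12_def by blast
  ultimately show ?thesis by simp
qed

lemma W12_increment:
  assumes "W12 w g" and "-1 \<le> x" "x \<le> y" "y \<le> 1"
  shows "w y - w x = integral {x..y} g"
proof -
  have "integral {-1..y} g = integral {-1..x} g + integral {x..y} g"
    using integrable_on_subinterval[OF W12_integrable(1)[OF assms(1)]] assms(2-4)
    by (intro Henstock_Kurzweil_Integration.integral_combine[symmetric]) auto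
  moreover have "w x = w (-1) + integral {-1..x} g" "w y = w (-1) + integral {-1..y} g"
    by (rule W12_primitive[OF assms(1)], use assms(2-4) in auto)+
  ultimately show ?thesis by simp
qed

lemma W12_continuous_on:
  assumes "W12 w g"
  shows "continuous_on {-1..1} w"
proof -
  have "continuous_on {-1..1} (\<lambda>y. w (-1) + integral {-1..y} g)"
    by (intro continuous_intros indefinite_integral_continuous_1 W12_integrable[OF assms])
  then show ?thesis
    by (rule continuous_on_eq) (rule W12_primitive[OF assms, symmetric])
qed

lemma W12_increment_square_le:
  assumes "W12 w g" and "-1 \<le> u" "u \<le> v" "v \<le> 1"
  shows "(w v - w u)\<^sup>2 \<le> (v - u) * integral {u..v} (\<lambda>y. (g y)\<^sup>2)"
  unfolding W12_increment[OF assms]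
  using assms W12_integrable[OF assms(1)]
  by (intro integral_square_le) (auto intro: integrable_on_subinterval)

lemma W12_affine_if_energy_le:
  assumes W: "W12 w g" and uv: "-1 \<le> u" "u \<le> v" "v \<le> 1"
    and total: "w v - w u = c * (v - u)"
    and energy: "integral {u..v} (\<lambda>y. (g y)\<^sup>2) \<le> c\<^sup>2 * (v - u)"
    and y: "y \<in> {u..v}"
  shows "w y = w u + c * (y - u)"
proof -
  have "g integrable_on {u..v}" "(\<lambda>y. (g y)\<^sup>2) integrable_on {u..v}"
    using W12_integrable[OF W] uv by (auto intro: integrable_on_subinterval)
  moreover have "integral {u..v} g = c * (v - u)"
    using W12_increment[OF W uv] total by simp
  ultimately have "integral {u..y} g = c * (y - u)"
    using energy y by (rule integral_affine_if_square_le)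
  moreover have "w y - w u = integral {u..y} g"
    using y uv by (intro W12_increment[OF W]) auto
  ultimately show ?thesis by simp
qed

lemma Hx_eq_integral:
  assumes "W12 w g"
  shows "Hx w g = integral {-1..1} (\<lambda>y. (g y)\<^sup>2) + measure lborel {y\<in>{-1..1}. w y \<noteq> 0}"
  using assms unfolding Hx_def W12_def by (simp add: set_borel_integral_eq_integral(2))

lemma extreme_zeros_obtain:
  fixes w :: "real \<Rightarrow> real"
  assumes "u \<le> v" and "continuous_on {u..v} w" and "w u < 0" "0 < w v"
  obtains p q where "u < p" "p \<le> q" "q < v" "w p = 0" "w q = 0"
    and "{y\<in>{u..v}. w y = 0} \<subseteq> {p..q}"
proof -
  define K where "K = {y\<in>{u..v}. w y = 0}"
  have closed: "closed K" unfolding K_def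
    using continuous_closed_preimage_constant[OF assms(2)] by simp
  have nonempty: "K \<noteq> {}"
    using IVT'[of w u 0 v] assms by (force simp: K_def)
  have bdd: "bdd_below K" "bdd_above K" unfolding K_def
    by (auto intro: bdd_belowI[of _ u] bdd_aboveI[of _ v])
  have inf: "Inf K \<in> K" by (rule closed_contains_Inf[OF nonempty bdd(1) closed])
  have sup: "Sup K \<in> K" by (rule closed_contains_Sup[OF nonempty bdd(2) closed])
  have "K \<subseteq> {Inf K..Sup K}" using cInf_lower[OF _ bdd(1)] cSup_upper[OF _ bdd(2)] by auto
  moreover have "u \<noteq> Inf K" "v \<noteq> Sup K" using inf sup assms(3,4) by (auto simp: K_def)
  ultimately show ?thesis using that[of "Inf K" "Sup K"] inf sup unfolding K_def by force
qed

lemma nonzero_set_measurable: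
  fixes w :: "real \<Rightarrow> real"
  assumes "continuous_on {-1..1} w"
  shows "{y\<in>{-1..1}. w y \<noteq> 0} \<in> sets lborel"
proof -
  have "closed {y\<in>{-1..1}. w y = 0}"
    using continuous_closed_preimage_constant[OF assms] by simp
  then have "{-1..1} - {y\<in>{-1..1}. w y = 0} \<in> sets lborel" by auto
  moreover have "{-1..1} - {y\<in>{-1..1}. w y = 0} = {y\<in>{-1..1}. w y \<noteq> 0}" by auto
  ultimately show ?thesis by simp
qed

lemma measure_nonzero_ge:
  fixes w :: "real \<Rightarrow> real"
  assumes "continuous_on {-1..1} w" and "-1 \<le> p" "p \<le> q" "q \<le> 1"
    and zeros: "{y\<in>{-1..1}. w y = 0} \<subseteq> {p..q}"
  shows "2 - (q - p) \<le> measure lborel {y\<in>{-1..1}. w y \<noteq> 0}"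
proof -
  have "{y\<in>{-1..1}. w y \<noteq> 0} \<in> fmeasurable lborel"
    using nonzero_set_measurable[OF assms(1)]
    by (rule fmeasurableI2[OF fmeasurable_cbox[of "-1::real" 1], rotated]) auto
  moreover have "{-1..1} - {p..q} \<subseteq> {y\<in>{-1..1}. w y \<noteq> 0}" using zeros by auto
  ultimately have "measure lborel ({-1..1} - {p..q}) \<le> measure lborel {y\<in>{-1..1}. w y \<noteq> 0}"
    by (intro measure_mono_fmeasurable) auto
  moreover have "measure lborel ({-1..1} - {p..q}) = 2 - (q - p)"
    using assms by (subst measure_Diff) auto
  ultimately show ?thesis by simp
qed

section \<open>The slice minimiser\<close>

definition profile_width :: "real \<Rightarrow> real" where
  "profile_width a = min a 1"

definition profile_energy :: "real \<Rightarrow> real" where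
  "profile_energy a = 2 * a\<^sup>2 / profile_width a + 2 * profile_width a"

definition profile :: "real \<Rightarrow> real \<Rightarrow> real" where
  "profile a y =
     (if y \<in> {-1..1}
      then a / profile_width a
             * (max 0 (y - (1 - profile_width a)) + min 0 (y + (1 - profile_width a)))
      else 0)"

lemma profile_width_pos: "0 < a \<Longrightarrow> 0 < profile_width a"
  and profile_width_le_1: "profile_width a \<le> 1"
  by (simp_all add: profile_width_def)

lemma profile_outside: "y \<notin> {-1..1} \<Longrightarrow> profile a y = 0"
  unfolding profile_def by (simp only: if_False)

lemma ramp_energy_ge:
  fixes a s t J :: real
  assumes "0 < s" "0 < t" "a\<^sup>2 \<le> t * J"
  shows "2 * a\<^sup>2 / s - a\<^sup>2 * t / s\<^sup>2 \<le> J"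
    and "J \<le> 2 * a\<^sup>2 / s - a\<^sup>2 * t / s\<^sup>2 \<Longrightarrow> a \<noteq> 0 \<Longrightarrow> t = s \<and> J = a\<^sup>2 / s"
proof -
  have slack: "t * (J - (2 * a\<^sup>2 / s - a\<^sup>2 * t / s\<^sup>2)) = (t * J - a\<^sup>2) + (a * (t - s) / s)\<^sup>2"
    using assms(1) by (simp add: field_simps power2_eq_square)
  then have "0 \<le> t * (J - (2 * a\<^sup>2 / s - a\<^sup>2 * t / s\<^sup>2))" using assms(3) by simp
  then show lower: "2 * a\<^sup>2 / s - a\<^sup>2 * t / s\<^sup>2 \<le> J" using assms(2) by (simp add: zero_le_mult_iff)
  assume "J \<le> 2 * a\<^sup>2 / s - a\<^sup>2 * t / s\<^sup>2" and "a \<noteq> 0"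
  with lower have "(t * J - a\<^sup>2) + (a * (t - s) / s)\<^sup>2 = 0" using slack by simp
  then have "t * J = a\<^sup>2" and "(a * (t - s) / s)\<^sup>2 = 0"
    using assms(3) by (simp_all add: add_nonneg_eq_0_iff)
  then show "t = s \<and> J = a\<^sup>2 / s" using \<open>a \<noteq> 0\<close> assms(1,2) by (auto simp: field_simps)
qed

lemma two_ramps_energy_ge:
  fixes a t1 t2 J1 J2 :: real
  assumes "0 < a" "0 < t1" "0 < t2" "t1 + t2 \<le> 2" "a\<^sup>2 \<le> t1 * J1" "a\<^sup>2 \<le> t2 * J2"
  shows "profile_energy a \<le> J1 + J2 + t1 + t2"
    and "J1 + J2 + t1 + t2 \<le> profile_energy a \<Longrightarrow>
           t1 = profile_width a \<and> t2 = profile_width a \<and>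
           J1 = a\<^sup>2 / profile_width a \<and> J2 = a\<^sup>2 / profile_width a"
proof -
  define s where "s = profile_width a"
  have s: "0 < s" using profile_width_pos[OF assms(1)] by (simp add: s_def)
  define tangent where "tangent t = 2 * a\<^sup>2 / s - a\<^sup>2 * t / s\<^sup>2" for t
  define excess where "excess = (2 * s - (t1 + t2)) * (a\<^sup>2 / s\<^sup>2 - 1)"
  note ramp1 = ramp_energy_ge[OF s(1) assms(2,5), folded tangent_def]
    and ramp2 = ramp_energy_ge[OF s(1) assms(3,6), folded tangent_def]
  text \<open>For \<open>a < 1\<close> the second factor of \<open>excess\<close> vanishes,
    for \<open>a \<ge> 1\<close> both factors are non-negative.\<close>
  have excess: "0 \<le> excess"
  proof (cases "a < 1")
    case True then show ?thesis using assms(1) by (simp add: excess_def s_def profile_width_def)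
  next
    case False then show ?thesis
      using assms(4) by (simp add: excess_def s_def profile_width_def one_le_power)
  qed
  have split: "J1 + J2 + t1 + t2 - profile_energy a
      = (J1 - tangent t1) + (J2 - tangent t2) + excess"
    using s by (simp add: profile_energy_def s_def[symmetric] tangent_def excess_def
        field_simps power2_eq_square)
  show "profile_energy a \<le> J1 + J2 + t1 + t2"
    using ramp1(1) ramp2(1) excess split by linarith
  assume "J1 + J2 + t1 + t2 \<le> profile_energy a"
  then have "J1 \<le> tangent t1" "J2 \<le> tangent t2"
    using ramp1(1) ramp2(1) excess split by linarith+
  then show "t1 = profile_width a \<and> t2 = profile_width a \<and>
      J1 = a\<^sup>2 / profile_width a \<and> J2 = a\<^sup>2 / profile_width a"
    using ramp1(2) ramp2(2) assms(1) unfolding s_def by auto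
qed

lemma admissible_ramp_bounds:
  fixes w g :: "real \<Rightarrow> real"
  assumes "0 < a" and "admissible a w g"
  obtains p q where "-1 < p" "p \<le> q" "q < 1" "w p = 0" "w q = 0"
    and "a\<^sup>2 \<le> (p + 1) * integral {-1..p} (\<lambda>y. (g y)\<^sup>2)"
    and "a\<^sup>2 \<le> (1 - q) * integral {q..1} (\<lambda>y. (g y)\<^sup>2)"
    and "0 \<le> integral {p..q} (\<lambda>y. (g y)\<^sup>2)"
    and "integral {-1..p} (\<lambda>y. (g y)\<^sup>2) + integral {p..q} (\<lambda>y. (g y)\<^sup>2)
           + integral {q..1} (\<lambda>y. (g y)\<^sup>2) + (p + 1) + (1 - q) \<le> Hx w g"
proof -
  have W: "W12 w g" and ends: "w (-1) = - a" "w 1 = a"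
    using assms(2) unfolding admissible_def by auto
  obtain p q where pq: "-1 < p" "p \<le> q" "q < 1" "w p = 0" "w q = 0"
    and zeros: "{y\<in>{-1..1}. w y = 0} \<subseteq> {p..q}"
    using extreme_zeros_obtain[of "-1" 1 w] W12_continuous_on[OF W] ends assms(1) by auto
  let ?J = "\<lambda>u v. integral {u..v} (\<lambda>y. (g y)\<^sup>2)"
  have left: "a\<^sup>2 \<le> (p + 1) * ?J (-1) p"
    using W12_increment_square_le[OF W, of "-1" p] pq ends by simp
  have right: "a\<^sup>2 \<le> (1 - q) * ?J q 1"
    using W12_increment_square_le[OF W, of q 1] pq ends by simp
  have g2: "(\<lambda>y. (g y)\<^sup>2) integrable_on {-1..1}" by (rule W12_integrable(2)[OF W])
  have middle: "0 \<le> ?J p q"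
    using integrable_on_subinterval[OF g2, of p q] pq by (intro integral_nonneg) auto
  have "?J (-1) 1 = ?J (-1) p + ?J p q + ?J q 1"
    using integrable_on_subinterval[OF g2] pq
    by (simp add: Henstock_Kurzweil_Integration.integral_combine)
  moreover have "(p + 1) + (1 - q) \<le> measure lborel {y\<in>{-1..1}. w y \<noteq> 0}"
    using measure_nonzero_ge[OF W12_continuous_on[OF W] _ _ _ zeros] pq by simp
  ultimately show ?thesis
    using that[OF pq left right middle] Hx_eq_integral[OF W] by simp
qed

lemma profile_energy_le_Hx:
  assumes "0 < a" and "admissible a w g"
  shows "profile_energy a \<le> Hx w g"
proof -
  obtain p q where pq: "-1 < p" "p \<le> q" "q < 1" "w p = 0" "w q = 0"
    and left: "a\<^sup>2 \<le> (p + 1) * integral {-1..p} (\<lambda>y. (g y)\<^sup>2)"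
    and right: "a\<^sup>2 \<le> (1 - q) * integral {q..1} (\<lambda>y. (g y)\<^sup>2)"
    and "0 \<le> integral {p..q} (\<lambda>y. (g y)\<^sup>2)"
    and "integral {-1..p} (\<lambda>y. (g y)\<^sup>2) + integral {p..q} (\<lambda>y. (g y)\<^sup>2)
           + integral {q..1} (\<lambda>y. (g y)\<^sup>2) + (p + 1) + (1 - q) \<le> Hx w g"
    by (rule admissible_ramp_bounds[OF assms])
  moreover have "profile_energy a \<le> integral {-1..p} (\<lambda>y. (g y)\<^sup>2) + integral {q..1} (\<lambda>y. (g y)\<^sup>2)
      + (p + 1) + (1 - q)"
    by (rule two_ramps_energy_ge(1)[OF assms(1) _ _ _ left right]) (use pq in auto)
  ultimately show ?thesis by linarith
qed

lemma W12_eq_profile: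
  fixes a :: real and w g :: "real \<Rightarrow> real"
  defines "s \<equiv> profile_width a"
  assumes a: "0 < a" and W: "W12 w g" and ends: "w (-1) = - a" "w 1 = a"
    and zeros: "w (s - 1) = 0" "w (1 - s) = 0"
    and left: "integral {-1..s - 1} (\<lambda>y. (g y)\<^sup>2) \<le> a\<^sup>2 / s"
    and middle: "integral {s - 1..1 - s} (\<lambda>y. (g y)\<^sup>2) \<le> 0"
    and right: "integral {1 - s..1} (\<lambda>y. (g y)\<^sup>2) \<le> a\<^sup>2 / s"
  shows "w = profile a"
proof -
  have s: "0 < s" "s \<le> 1" using profile_width_pos[OF a] profile_width_le_1 by (simp_all add: s_def)
  have slope: "a / s * s = a" "(a / s)\<^sup>2 * s = a\<^sup>2 / s"
    using s by (simp_all add: field_simps power2_eq_square)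
  have "w y = profile a y" if y: "y \<in> {-1..1}" for y
  proof -
    consider "y \<le> s - 1" | "s - 1 \<le> y" "y \<le> 1 - s" | "1 - s \<le> y" using s by linarith
    then show ?thesis
    proof cases
      case 1
      have "w y = w (-1) + a / s * (y - -1)"
        by (rule W12_affine_if_energy_le[OF W, of _ "s - 1"])
          (use s y 1 ends zeros left slope in auto)
      then show ?thesis using 1 y s ends by (simp add: profile_def s_def[symmetric] field_simps)
    next
      case 2
      have "w y = w (s - 1) + 0 * (y - (s - 1))"
        by (rule W12_affine_if_energy_le[OF W, of _ "1 - s"]) (use s 2 zeros middle in auto)
      then show ?thesis using 2 y zeros by (simp add: profile_def s_def[symmetric])
    next
      case 3
      have "w y = w (1 - s) + a / s * (y - (1 - s))"
        by (rule W12_affine_if_energy_le[OF W, of _ 1]) (use s y 3 ends zeros right slope in auto)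
      then show ?thesis using 3 y s zeros by (simp add: profile_def s_def[symmetric])
    qed
  qed
  moreover have "w y = 0" if "y \<notin> {-1..1}" for y using W that unfolding W12_def by blast
  ultimately show ?thesis using profile_outside by fastforce
qed

lemma eq_profile_if_Hx_le:
  assumes a: "0 < a" and adm: "admissible a w g" and le: "Hx w g \<le> profile_energy a"
  shows "w = profile a"
proof -
  obtain p q where pq: "-1 < p" "p \<le> q" "q < 1" "w p = 0" "w q = 0"
    and left: "a\<^sup>2 \<le> (p + 1) * integral {-1..p} (\<lambda>y. (g y)\<^sup>2)"
    and right: "a\<^sup>2 \<le> (1 - q) * integral {q..1} (\<lambda>y. (g y)\<^sup>2)"
    and middle: "0 \<le> integral {p..q} (\<lambda>y. (g y)\<^sup>2)"
    and total: "integral {-1..p} (\<lambda>y. (g y)\<^sup>2) + integral {p..q} (\<lambda>y. (g y)\<^sup>2)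
           + integral {q..1} (\<lambda>y. (g y)\<^sup>2) + (p + 1) + (1 - q) \<le> Hx w g"
    by (rule admissible_ramp_bounds[OF a adm])
  define s where "s = profile_width a"
  have "p + 1 = s \<and> 1 - q = s \<and>
      integral {-1..p} (\<lambda>y. (g y)\<^sup>2) = a\<^sup>2 / s \<and> integral {q..1} (\<lambda>y. (g y)\<^sup>2) = a\<^sup>2 / s"
    unfolding s_def using pq middle total le
    by (intro two_ramps_energy_ge(2)[OF a _ _ _ left right]) auto
  moreover from this have "integral {p..q} (\<lambda>y. (g y)\<^sup>2) \<le> 0"
    using total le by (simp add: profile_energy_def s_def)
  moreover have "p = s - 1" "q = 1 - s" using calculation(1) by auto
  ultimately show ?thesis
    using W12_eq_profile[OF a, of w g] adm pq unfolding admissible_def s_def by auto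
qed

definition profile_deriv :: "real \<Rightarrow> real \<Rightarrow> real" where
  "profile_deriv a y = (if 1 - profile_width a \<le> \<bar>y\<bar> then a / profile_width a else 0)"

lemma ramp_has_real_derivative:
  fixes c x :: real
  assumes "0 \<le> c" "\<bar>x\<bar> \<noteq> c"
  shows "((\<lambda>t. max 0 (t - c) + min 0 (t + c))
           has_real_derivative (if c < \<bar>x\<bar> then 1 else 0)) (at x)"
proof -
  consider "c < x" | "x < -c" | "-c < x" "x < c" using assms by linarith
  then show ?thesis
  proof cases
    case 1
    have "((\<lambda>t. t - c) has_real_derivative (if c < \<bar>x\<bar> then 1 else 0)) (at x)"
      using 1 assms by (auto intro!: derivative_eq_intros)
    then show ?thesis
      by (rule has_field_derivative_transform_within_open[of _ _ _ "{c<..}"]) (use 1 assms in auto)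
  next
    case 2
    have "((\<lambda>t. t + c) has_real_derivative (if c < \<bar>x\<bar> then 1 else 0)) (at x)"
      using 2 assms by (auto intro!: derivative_eq_intros)
    then show ?thesis
      by (rule has_field_derivative_transform_within_open[of _ _ _ "{..< -c}"])
        (use 2 assms in auto)
  next
    case 3
    have "((\<lambda>t. 0) has_real_derivative (if c < \<bar>x\<bar> then 1 else 0)) (at x)"
      using 3 by auto
    then show ?thesis
      by (rule has_field_derivative_transform_within_open[of _ _ _ "{-c<..<c}"]) (use 3 in auto)
  qed
qed

lemma profile_has_real_derivative:
  assumes "0 < a" "x \<in> {-1<..<1}" "\<bar>x\<bar> \<noteq> 1 - profile_width a"
  shows "(profile a has_real_derivative profile_deriv a x) (at x)"
proof -
  define s where "s = profile_width a"
  have "0 \<le> 1 - s" using profile_width_le_1 by (simp add: s_def)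
  from DERIV_cmult[OF ramp_has_real_derivative[OF this], of x "a / s"]
  have "((\<lambda>t. a / s * (max 0 (t - (1 - s)) + min 0 (t + (1 - s)))) has_real_derivative
      a / s * (if 1 - s < \<bar>x\<bar> then 1 else 0)) (at x)"
    using assms(3) by (simp add: s_def)
  also have "a / s * (if 1 - s < \<bar>x\<bar> then 1 else 0) = profile_deriv a x"
    using assms(3) by (auto simp: profile_deriv_def s_def)
  finally show ?thesis
    by (rule has_field_derivative_transform_within_open[of _ _ _ "{-1<..<1}"])
      (use assms(2) in \<open>auto simp: profile_def s_def\<close>)
qed

lemma continuous_on_profile: "continuous_on {-1..1} (profile a)"
proof -
  have "continuous_on {-1..1} (\<lambda>y. a / profile_width a
      * (max 0 (y - (1 - profile_width a)) + min 0 (y + (1 - profile_width a))))"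
    by (intro continuous_intros)
  then show ?thesis by (rule continuous_on_eq) (simp add: profile_def)
qed

lemma profile_deriv_has_integral:
  assumes "0 < a" "y \<in> {-1..1}"
  shows "(profile_deriv a has_integral (profile a y - profile a (-1))) {-1..y}"
proof (rule fundamental_theorem_of_calculus_interior_strong
    [of "{1 - profile_width a, -(1 - profile_width a)}"])
  show "continuous_on {-1..y} (profile a)"
    by (rule continuous_on_subset[OF continuous_on_profile]) (use assms(2) in auto)
  fix x assume "x \<in> {-1<..<y} - {1 - profile_width a, -(1 - profile_width a)}"
  then show "(profile a has_vector_derivative profile_deriv a x) (at x)"
    unfolding has_real_derivative_iff_has_vector_derivative[symmetric]
    using assms by (intro profile_has_real_derivative) auto
qed (use assms(2) in auto)

lemma profile_ends: "0 < a \<Longrightarrow> profile a (-1) = - a \<and> profile a 1 = a"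
  using profile_width_pos[of a] profile_width_le_1[of a] by (simp add: profile_def)

lemma set_integrable_profile_deriv:
  "set_integrable lborel {-1..1} (profile_deriv a)"
  "set_integrable lborel {-1..1} (\<lambda>y. (profile_deriv a y)\<^sup>2)"
proof -
  have meas: "profile_deriv a \<in> borel_measurable lborel" unfolding profile_deriv_def by measurable
  show "set_integrable lborel {-1..1} (profile_deriv a)" unfolding set_integrable_def
    by (rule integrableI_bounded_set[where A="{-1..1}" and B="\<bar>a / profile_width a\<bar>"])
      (use meas in \<open>auto simp: profile_deriv_def indicator_def\<close>)
  show "set_integrable lborel {-1..1} (\<lambda>y. (profile_deriv a y)\<^sup>2)" unfolding set_integrable_def
    by (rule integrableI_bounded_set[where A="{-1..1}" and B="(a / profile_width a)\<^sup>2"])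
      (use meas in \<open>auto simp: profile_deriv_def indicator_def\<close>)
qed

lemma admissible_profile:
  assumes "0 < a"
  shows "admissible a (profile a) (profile_deriv a)"
proof -
  have "profile a y = profile a (-1) + set_lebesgue_integral lborel {-1..y} (profile_deriv a)"
    if y: "y \<in> {-1..1}" for y
  proof -
    have "set_integrable lborel {-1..y} (profile_deriv a)"
      by (rule set_integrable_subset[OF set_integrable_profile_deriv(1)]) (use y in auto)
    then have "set_lebesgue_integral lborel {-1..y} (profile_deriv a)
        = integral {-1..y} (profile_deriv a)"
      by (rule set_borel_integral_eq_integral(2))
    then show ?thesis using integral_unique[OF profile_deriv_has_integral[OF assms y]] by simp
  qed
  moreover have "profile a y = 0" if "y \<notin> {-1..1}" for y by (rule profile_outside[OF that])
  ultimately show ?thesis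
    unfolding admissible_def W12_def using set_integrable_profile_deriv profile_ends[OF assms]
    by blast
qed

lemma Hx_profile_le:
  assumes "0 < a"
  shows "Hx (profile a) (profile_deriv a) \<le> profile_energy a"
proof -
  define s where "s = profile_width a"
  have s: "0 < s" "s \<le> 1"
    using profile_width_pos[OF assms] profile_width_le_1 by (simp_all add: s_def)
  have "(\<lambda>y. (profile_deriv a y)\<^sup>2) = (\<lambda>y. a / s * profile_deriv a y)"
    by (auto simp: profile_deriv_def s_def power2_eq_square)
  then have "integral {-1..1} (\<lambda>y. (profile_deriv a y)\<^sup>2) = a / s * (profile a 1 - profile a (-1))"
    using integral_unique[OF profile_deriv_has_integral[OF assms, of 1]] by simp
  also have "\<dots> = 2 * a\<^sup>2 / s" using profile_ends[OF assms] by (simp add: power2_eq_square)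
  finally have energy: "integral {-1..1} (\<lambda>y. (profile_deriv a y)\<^sup>2) = 2 * a\<^sup>2 / s" .
  have support: "{y\<in>{-1..1}. profile a y \<noteq> 0} \<subseteq> {-1..-(1 - s)} \<union> {1 - s..1}"
  proof
    fix y assume "y \<in> {y\<in>{-1..1}. profile a y \<noteq> 0}"
    then have "y \<in> {-1..1}" "max 0 (y - (1 - s)) + min 0 (y + (1 - s)) \<noteq> 0"
      by (auto simp: profile_def s_def)
    then show "y \<in> {-1..-(1 - s)} \<union> {1 - s..1}" by (auto simp: max_def min_def split: if_splits)
  qed
  have "{-1..-(1 - s)} \<union> {1 - s..1} \<in> fmeasurable lborel"
    using fmeasurable_cbox[of "-1" "-(1 - s)"] fmeasurable_cbox[of "1 - s" 1]
    by (auto intro: fmeasurable.Un)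
  then have "measure lborel {y\<in>{-1..1}. profile a y \<noteq> 0}
      \<le> measure lborel ({-1..-(1 - s)} \<union> {1 - s..1})"
    using support nonzero_set_measurable[OF continuous_on_profile]
    by (rule measure_mono_fmeasurable[rotated 2])
  also have "\<dots> \<le> measure lborel {-1..-(1 - s)} + measure lborel {1 - s..1}"
    by (rule measure_Un_le) auto
  also have "\<dots> = 2 * s" using s by simp
  finally have "measure lborel {y\<in>{-1..1}. profile a y \<noteq> 0} \<le> 2 * s" .
  moreover have "W12 (profile a) (profile_deriv a)"
    using admissible_profile[OF assms] unfolding admissible_def by blast
  ultimately show ?thesis
    using Hx_eq_integral energy unfolding profile_energy_def s_def by fastforce
qed

lemma The_slice_min_eq_profile:
  assumes "0 < a"
  shows "(THE w. slice_min a w) = profile a"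
proof (rule the_equality)
  show "slice_min a (profile a)"
    unfolding slice_min_def using admissible_profile[OF assms] Hx_profile_le[OF assms]
      profile_energy_le_Hx[OF assms] by (meson order_trans)
next
  fix w assume "slice_min a w"
  then obtain g where "admissible a w g" and "Hx w g \<le> Hx (profile a) (profile_deriv a)"
    unfolding slice_min_def using admissible_profile[OF assms] by blast
  then show "w = profile a"
    using eq_profile_if_Hx_le[OF assms] Hx_profile_le[OF assms] by (meson order_trans)
qed

section \<open>Lipschitz dependence on x\<close>

lemma profile_eq_cases:
  assumes "0 < a" "y \<in> {-1..1}"
  shows "profile a y = (if 1 \<le> a then a * y else max 0 (y - (1 - a)) + min 0 (y + (1 - a)))"
  using assms by (auto simp: profile_def profile_width_def max_def min_def)

lemma profile_lipschitz:
  assumes "0 < a" "0 < b"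
  shows "\<bar>profile a y - profile b y\<bar> \<le> \<bar>a - b\<bar>"
proof (cases "y \<in> {-1..1}")
  case False then show ?thesis by (simp add: profile_outside)
next
  case True
  define ramp where "ramp c = max 0 (y - (1 - c)) + min 0 (y + (1 - c))" for c
  have ramp_1: "ramp 1 = 1 * y" unfolding ramp_def by (auto simp: max_def min_def)
  have ramp_lip: "\<bar>ramp c - ramp d\<bar> \<le> \<bar>c - d\<bar>" if "c \<le> 1" "d \<le> 1" for c d
    using that unfolding ramp_def by (cases "0 \<le> y") (auto simp: max_def min_def abs_if)
  have line_lip: "\<bar>c * y - d * y\<bar> \<le> \<bar>c - d\<bar>" for c d
  proof -
    have "\<bar>c * y - d * y\<bar> = \<bar>c - d\<bar> * \<bar>y\<bar>" by (simp add: abs_mult[symmetric] algebra_simps)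
    also have "\<dots> \<le> \<bar>c - d\<bar>" using True by (auto intro: mult_left_le)
    finally show ?thesis .
  qed
  have profile: "profile c y = (if 1 \<le> c then c * y else ramp c)" if "0 < c" for c
    using profile_eq_cases[OF that True] by (simp add: ramp_def)
  text \<open>When \<open>a\<close> and \<open>b\<close> lie on different sides of 1, pass through the common value at 1.\<close>
  consider "1 \<le> a" "1 \<le> b" | "a < 1" "b < 1" | "a < 1" "1 \<le> b" | "1 \<le> a" "b < 1" by linarith
  then show ?thesis
  proof cases
    case 1 then show ?thesis using profile assms line_lip by simp
  next
    case 2 then show ?thesis using profile assms ramp_lip[of a b] by simp
  next
    case 3 then show ?thesis
      using profile assms ramp_lip[of a 1] line_lip[of 1 b] unfolding ramp_1 by simp
  next
    case 4 then show ?thesis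
      using profile assms ramp_lip[of 1 b] line_lip[of a 1] unfolding ramp_1 by simp
  qed
qed

lemma fN_eq_max_min:
  assumes "0 < \<alpha>" "\<alpha> < 1" "0 < N"
  shows "fN \<alpha> N x = max (1 - \<alpha>) (min 2 (\<bar>x\<bar> * (1 + \<alpha>) / N - 2 * \<alpha>))"
proof -
  have "\<bar>x\<bar> * (1 + \<alpha>) / N - 2 * \<alpha> \<le> 1 - \<alpha> \<longleftrightarrow> \<bar>x\<bar> * (1 + \<alpha>) \<le> N * (1 + \<alpha>)"
    and "\<bar>x\<bar> * (1 + \<alpha>) / N - 2 * \<alpha> \<le> 2 \<longleftrightarrow> \<bar>x\<bar> * (1 + \<alpha>) \<le> (2 * N) * (1 + \<alpha>)"
    using assms by (simp_all add: field_simps)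
  then have "\<bar>x\<bar> * (1 + \<alpha>) / N - 2 * \<alpha> \<le> 1 - \<alpha> \<longleftrightarrow> \<bar>x\<bar> \<le> N"
    and "\<bar>x\<bar> * (1 + \<alpha>) / N - 2 * \<alpha> \<le> 2 \<longleftrightarrow> \<bar>x\<bar> \<le> 2 * N"
    using assms by (simp_all add: mult_le_cancel_right)
  then show ?thesis using assms unfolding fN_def by auto
qed

lemma fN_pos: "0 < \<alpha> \<Longrightarrow> \<alpha> < 1 \<Longrightarrow> 0 < N \<Longrightarrow> 0 < fN \<alpha> N x"
  by (simp add: fN_eq_max_min)

lemma fN_lipschitz:
  assumes "0 < \<alpha>" "\<alpha> < 1" "0 < N"
  shows "\<bar>fN \<alpha> N t - fN \<alpha> N x\<bar> \<le> (1 + \<alpha>) / N * \<bar>t - x\<bar>"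
proof -
  define k where "k = (1 + \<alpha>) / N"
  have k: "0 < k" using assms by (simp add: k_def)
  have clamp_lip: "\<bar>max (1 - \<alpha>) (min 2 u) - max (1 - \<alpha>) (min 2 v)\<bar> \<le> \<bar>u - v\<bar>" for u v :: real
    by (auto simp: max_def min_def abs_if)
  have "\<bar>fN \<alpha> N t - fN \<alpha> N x\<bar> \<le> \<bar>(\<bar>t\<bar> * k - 2 * \<alpha>) - (\<bar>x\<bar> * k - 2 * \<alpha>)\<bar>"
    using clamp_lip[of "\<bar>t\<bar> * k - 2 * \<alpha>" "\<bar>x\<bar> * k - 2 * \<alpha>"]
    unfolding fN_eq_max_min[OF assms] k_def by simp
  also have "\<dots> = \<bar>\<bar>t\<bar> - \<bar>x\<bar>\<bar> * k" using k by (simp add: abs_mult flip: left_diff_distrib)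
  also have "\<dots> \<le> \<bar>t - x\<bar> * k" using k by (intro mult_right_mono) auto
  finally show ?thesis unfolding k_def by (simp add: mult.commute)
qed

lemma fN_locally_constant:
  assumes "0 < N" and "\<bar>x\<bar> < N \<or> 2 * N < \<bar>x\<bar>"
  shows "\<forall>\<^sub>F t in at x. fN \<alpha> N t = fN \<alpha> N x"
proof -
  have abs: "((\<lambda>t. \<bar>t\<bar>) \<longlongrightarrow> \<bar>x\<bar>) (at x)" by (intro tendsto_intros)
  from assms(2) show ?thesis
  proof
    assume "\<bar>x\<bar> < N"
    with order_tendstoD(2)[OF abs this] show ?thesis
      by (elim eventually_mono) (simp add: fN_def)
  next
    assume "2 * N < \<bar>x\<bar>"
    with order_tendstoD(1)[OF abs this] show ?thesis
      by (elim eventually_mono) (use assms(1) in \<open>simp add: fN_def\<close>)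
  qed
qed

lemma vN_eq_profile:
  "0 < \<alpha> \<Longrightarrow> \<alpha> < 1 \<Longrightarrow> 0 < N \<Longrightarrow> vN \<alpha> N x y = profile (fN \<alpha> N x) y"
  unfolding vN_def by (simp add: The_slice_min_eq_profile fN_pos)

lemma deriv_abs_le_if_eventually_lipschitz:
  fixes f :: "real \<Rightarrow> real"
  assumes "f differentiable (at x)" and "\<forall>\<^sub>F t in at x. \<bar>f t - f x\<bar> \<le> k * \<bar>t - x\<bar>"
  shows "\<bar>deriv f x\<bar> \<le> k"
proof -
  have "(f has_field_derivative deriv f x) (at x)"
    using assms(1) by (simp add: DERIV_deriv_iff_real_differentiable)
  then have "((\<lambda>t. \<bar>(f t - f x) / (t - x)\<bar>) \<longlongrightarrow> \<bar>deriv f x\<bar>) (at x)"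
    by (intro tendsto_rabs) (simp add: has_field_derivative_iff)
  moreover have "\<forall>\<^sub>F t in at x. \<bar>(f t - f x) / (t - x)\<bar> \<le> k"
    using eventually_conj[OF assms(2) eventually_neq_at_within[of x x UNIV]]
    by (elim eventually_mono) (simp add: abs_divide divide_le_eq)
  ultimately show ?thesis by (rule tendsto_upperbound) simp
qed

lemma dvN_dx_abs_le:
  assumes "0 < \<alpha>" "\<alpha> < 1" "0 < N" and "0 \<le> k"
    and "\<forall>\<^sub>F t in at x. \<bar>fN \<alpha> N t - fN \<alpha> N x\<bar> \<le> k * \<bar>t - x\<bar>"
  shows "\<bar>dvN_dx \<alpha> N x y\<bar> \<le> k"
proof (cases "(\<lambda>t. vN \<alpha> N t y) differentiable (at x)")
  case True
  have "\<forall>\<^sub>F t in at x. \<bar>vN \<alpha> N t y - vN \<alpha> N x y\<bar> \<le> k * \<bar>t - x\<bar>"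
    using assms(5)
  proof (rule eventually_mono)
    fix t assume "\<bar>fN \<alpha> N t - fN \<alpha> N x\<bar> \<le> k * \<bar>t - x\<bar>"
    moreover have "\<bar>profile (fN \<alpha> N t) y - profile (fN \<alpha> N x) y\<bar> \<le> \<bar>fN \<alpha> N t - fN \<alpha> N x\<bar>"
      using fN_pos[OF assms(1-3)] by (intro profile_lipschitz)
    ultimately show "\<bar>vN \<alpha> N t y - vN \<alpha> N x y\<bar> \<le> k * \<bar>t - x\<bar>"
      unfolding vN_eq_profile[OF assms(1-3)] by linarith
  qed
  with True show ?thesis
    unfolding dvN_dx_def by (simp add: deriv_abs_le_if_eventually_lipschitz)
qed (simp add: dvN_dx_def assms(4))

lemma dvN_dx_square_le:
  assumes "0 < \<alpha>" "\<alpha> < 1" "0 < N"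
  shows "(dvN_dx \<alpha> N x y)\<^sup>2 \<le> (if N \<le> \<bar>x\<bar> \<and> \<bar>x\<bar> \<le> 2 * N then 4 / N\<^sup>2 else 0)"
proof (cases "N \<le> \<bar>x\<bar> \<and> \<bar>x\<bar> \<le> 2 * N")
  case True
  have "\<bar>dvN_dx \<alpha> N x y\<bar> \<le> (1 + \<alpha>) / N"
    using assms fN_lipschitz[OF assms] by (intro dvN_dx_abs_le always_eventually) auto
  also have "\<dots> \<le> 2 / N" using assms by (simp add: divide_right_mono)
  finally have "\<bar>dvN_dx \<alpha> N x y\<bar>\<^sup>2 \<le> (2 / N)\<^sup>2" by (intro power_mono) auto
  with True show ?thesis by (simp add: power_divide)
next
  case False
  then have "\<bar>dvN_dx \<alpha> N x y\<bar> \<le> 0"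
    using fN_locally_constant[OF assms(3), of x \<alpha>]
    by (intro dvN_dx_abs_le[OF assms]) (auto elim: eventually_mono)
  with False show ?thesis by simp
qed

lemma emeasure_band_le:
  assumes "0 < N"
  shows "emeasure lborel (({-2*N..-N} \<union> {N..2*N}) \<times> {-1..1::real}) \<le> ennreal (4 * N)"
proof -
  have "emeasure lborel ({-2*N..-N} \<union> {N..2*N})
      \<le> emeasure lborel {-2*N..-N} + emeasure lborel {N..2*N}"
    by (rule emeasure_subadditive) auto
  also have "\<dots> = ennreal (2 * N)" using assms by (simp flip: ennreal_plus)
  finally have "emeasure lborel ({-2*N..-N} \<union> {N..2*N}) * emeasure lborel {-1..1::real}
      \<le> ennreal (2 * N) * ennreal 2"
    by (simp add: mult_right_mono)
  also have "\<dots> = ennreal (4 * N)" using assms ennreal_mult[of "2 * N" 2] by simp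
  finally show ?thesis
    by (subst lborel_prod[symmetric]) (simp add: lborel.emeasure_pair_measure_Times)
qed

theorem lemma2p2:
  fixes \<alpha> N :: real
  assumes "0 < \<alpha>" and "\<alpha> < 1" and "N > 0"
  shows "(\<integral>\<^sup>+ z \<in> {-3*N..3*N} \<times> {-1..1::real}. ennreal ((dvN_dx \<alpha> N (fst z) (snd z))\<^sup>2) \<partial>lborel)
           \<le> ennreal (16 / N)"
proof -
  define S where "S = ({-2*N..-N} \<union> {N..2*N}) \<times> {-1..1::real}"
  have "ennreal ((dvN_dx \<alpha> N (fst z) (snd z))\<^sup>2) * indicator ({-3*N..3*N} \<times> {-1..1}) z
      \<le> ennreal (4 / N\<^sup>2) * indicator S z" for z :: "real \<times> real"
    using dvN_dx_square_le[OF assms, of "fst z" "snd z"]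
    by (cases z) (auto simp: S_def indicator_def ennreal_leI split: if_splits)
  then have "(\<integral>\<^sup>+ z \<in> {-3*N..3*N} \<times> {-1..1::real}. ennreal ((dvN_dx \<alpha> N (fst z) (snd z))\<^sup>2) \<partial>lborel)
      \<le> ennreal (4 / N\<^sup>2) * emeasure lborel S"
    by (subst nn_integral_cmult_indicator[symmetric])
      (auto simp: S_def simp flip: lborel_prod intro!: nn_integral_mono)
  also have "\<dots> \<le> ennreal (4 / N\<^sup>2) * ennreal (4 * N)"
    unfolding S_def by (intro mult_left_mono emeasure_band_le assms) simp
  also have "\<dots> = ennreal (16 / N)"
    using assms by (simp flip: ennreal_mult add: power2_eq_square)
  finally show ?thesis .
qed

end
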